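(* Let $1\le d_1\le d_2$ and let $G=(V,E)$ be a finite connected undirected unweighted $(d_1,d_2)$-bidegreed graph. Then for every $\lambda\in[0,1]$ and every $S_0\subseteq V$, \[\mathrm{fp}^{\lambda,1}_G(S_0)=\frac{\sum_{v\in S_0}f(\deg_v)}{\sum_{v\in V}f(\deg_v)},\qquad f(d_1)=1,\quad f(d_2)=\frac{\lambda d_1+(1-\lambda)d_2}{\lambda d_2+(1-\lambda)d_1}.\]
   Context: A graph is $(d_1,d_2)$-bidegreed, $d_1\le d_2$, if every vertex has degree in $\{d_1,d_2\}$; $\deg_v$ is the degree of $v$. The $\lambda$-mixed Moran process on a connected graph $G=(V,E)$ with $n=|V|\ge 2$: each vertex hosts a resident (fitness $1$) or mutant (fitness $r>0$); the state is the mutant set $S_t\subseteq V$. Each step, independently: with probability $\lambda$ a Birth-death step (a vertex $u$ chosen with probability proportional to fitness among all vertices; a uniformly random neighbor of $u$ takes $u$'s type); with probability $1-\lambda$ a death-Birth step (a uniformly random vertex $v$ dies; a neighbor $u$ of $v$ chosen with probability proportional to fitness among the neighbors of $v$; $v$ takes $u$'s type). $\mathrm{fp}^{\lambda,r}_G(S_0)$ is the probability of reaching $S_t=V$ from $S_0$. *)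

theory Defs
  imports Complex_Main
begin

definition nbrs :: "'a set \<Rightarrow> ('a \<Rightarrow> 'a \<Rightarrow> bool) \<Rightarrow> 'a \<Rightarrow> 'a set" where
  "nbrs V E v = {u \<in> V. E v u}"

definition deg :: "'a set \<Rightarrow> ('a \<Rightarrow> 'a \<Rightarrow> bool) \<Rightarrow> 'a \<Rightarrow> nat" where
  "deg V E v = card (nbrs V E v)"

definition simple_graph :: "'a set \<Rightarrow> ('a \<Rightarrow> 'a \<Rightarrow> bool) \<Rightarrow> bool" where
  "simple_graph V E \<longleftrightarrow> finite V \<and> (\<forall>u v. E u v \<longrightarrow> u \<in> V \<and> v \<in> V)
     \<and> (\<forall>u v. E u v \<longrightarrow> E v u) \<and> (\<forall>u. \<not> E u u)"

definition connected_graph :: "'a set \<Rightarrow> ('a \<Rightarrow> 'a \<Rightarrow> bool) \<Rightarrow> bool" where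
  "connected_graph V E \<longleftrightarrow> V \<noteq> {} \<and>
     (\<forall>u\<in>V. \<forall>v\<in>V. (\<lambda>x y. E x y \<and> x \<in> V \<and> y \<in> V)\<^sup>*\<^sup>* u v)"

definition bidegreed :: "'a set \<Rightarrow> ('a \<Rightarrow> 'a \<Rightarrow> bool) \<Rightarrow> nat \<Rightarrow> nat \<Rightarrow> bool" where
  "bidegreed V E d1 d2 \<longleftrightarrow> d1 \<le> d2 \<and> (\<forall>v\<in>V. deg V E v \<in> {d1, d2})"

text \<open>Fitness of vertex u in state S (mutant set), mutant fitness r.\<close>
definition fit :: "real \<Rightarrow> 'a set \<Rightarrow> 'a \<Rightarrow> real" where
  "fit r S u = (if u \<in> S then r else 1)"

definition take_type :: "'a set \<Rightarrow> 'a \<Rightarrow> 'a \<Rightarrow> 'a set" where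
  "take_type S u v = (if u \<in> S then insert v S else S - {v})"

text \<open>reach_prob V E lam r n S = probability that S_n = V when S_0 = S, for the
  lambda-mixed Moran process (one-step analysis: expectation over the first step).\<close>
fun reach_prob :: "'a set \<Rightarrow> ('a \<Rightarrow> 'a \<Rightarrow> bool) \<Rightarrow> real \<Rightarrow> real \<Rightarrow> nat \<Rightarrow> 'a set \<Rightarrow> real" where
  "reach_prob V E lam r 0 S = (if S = V then 1 else 0)"
| "reach_prob V E lam r (Suc n) S =
     lam * (\<Sum>u\<in>V. fit r S u / (\<Sum>w\<in>V. fit r S w) *
              (\<Sum>v\<in>nbrs V E u. (1 / real (deg V E u)) *
                   reach_prob V E lam r n (take_type S u v)))
   + (1 - lam) * (\<Sum>v\<in>V. (1 / real (card V)) *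
              (\<Sum>u\<in>nbrs V E v. fit r S u / (\<Sum>w\<in>nbrs V E v. fit r S w) *
                   reach_prob V E lam r n (take_type S u v)))"

text \<open>Fixation probability: probability of ever reaching the absorbing state V,
  i.e. the limit of P(S_n = V) (V is absorbing, so this is nondecreasing in n).\<close>
definition fp :: "'a set \<Rightarrow> ('a \<Rightarrow> 'a \<Rightarrow> bool) \<Rightarrow> real \<Rightarrow> real \<Rightarrow> 'a set \<Rightarrow> real" where
  "fp V E lam r S0 = lim (\<lambda>n. reach_prob V E lam r n S0)"

end

theory Submission
  imports Defs
begin

text \<open>At neutral fitness \<open>r = 1\<close> one step of the process acts on functions of the state by a
  linear operator whose weight on the move ``\<open>v\<close> takes the type of its neighbour \<open>u\<close>'' is
  \<open>W u v = \<lambda>/deg u + (1-\<lambda>)/deg v\<close>, up to the factor \<open>1/|V|\<close>. The probabilities of being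
  absorbed at \<open>V\<close> within \<open>m\<close> steps increase to a fixed point of this operator (a harmonic
  function) with values \<open>0\<close> at \<open>\<emptyset>\<close> and \<open>1\<close> at \<open>V\<close>. Since \<open>f\<close> satisfies the detailed balance
  \<open>f(deg v) W u v = f(deg u) W v u\<close> along every edge, the weighted count
  \<open>\<Sum>x\<in>S. f(deg x)\<close> is harmonic as well, each move across an edge being compensated by the
  reverse move. Finally, on a connected graph a maximum of a harmonic function spreads along
  edges (all weights are positive) until it reaches \<open>\<emptyset>\<close> or \<open>V\<close>, so a harmonic function is
  determined by its two boundary values.\<close>

lemma convex_comb_pos:
  fixes t x y :: real
  assumes "0 \<le> t" "t \<le> 1" "0 < x" "0 < y"
  shows "0 < t * x + (1 - t) * y"
  using assms by (cases "t = 0") (auto intro: add_pos_nonneg)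

locale neutral_mixed_moran =
  fixes V :: "'a set" and E :: "'a \<Rightarrow> 'a \<Rightarrow> bool" and lam :: real
  assumes simple: "simple_graph V E"
    and connected: "connected_graph V E"
    and deg_pos: "\<And>v. v \<in> V \<Longrightarrow> 1 \<le> deg V E v"
    and lam_nonneg: "0 \<le> lam" and lam_le_1: "lam \<le> 1"
begin

lemma finite_V: "finite V"
  using simple by (simp add: simple_graph_def)

lemma V_nonempty: "V \<noteq> {}"
  using connected by (simp add: connected_graph_def)

lemma card_V_pos: "0 < card V"
  using finite_V V_nonempty by (simp add: card_gt_0_iff)

lemma edge_sym: "E u v \<Longrightarrow> E v u"
  using simple by (simp add: simple_graph_def)

lemma mem_nbrs: "v \<in> nbrs V E u \<longleftrightarrow> v \<in> V \<and> E u v"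
  by (simp add: nbrs_def)

lemma finite_nbrs: "finite (nbrs V E u)"
  using finite_V by (simp add: nbrs_def)

lemma exists_edge_leaving:
  assumes "S \<subseteq> V" "S \<noteq> {}" "S \<noteq> V"
  shows "\<exists>u\<in>S. \<exists>v\<in>V - S. E u v"
proof -
  obtain x y where x: "x \<in> S" and y: "y \<in> V" "y \<notin> S"
    using assms by auto
  let ?R = "\<lambda>a b. E a b \<and> a \<in> V \<and> b \<in> V"
  have "?R\<^sup>*\<^sup>* x y"
    using connected x y assms(1) unfolding connected_graph_def by auto
  then have "x \<in> S \<Longrightarrow> y \<notin> S \<Longrightarrow> \<exists>u v. u \<in> S \<and> v \<notin> S \<and> ?R u v"
    by (induction rule: rtranclp_induct) blast+
  then show ?thesis
    using x y by blast
qed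

lemma sum_nbrs_swap:
  "(\<Sum>v\<in>V. \<Sum>u\<in>nbrs V E v. g u v) = (\<Sum>u\<in>V. \<Sum>v\<in>nbrs V E u. g u v)"
proof -
  have "(\<Sum>v\<in>V. \<Sum>u\<in>nbrs V E v. g u v) = (\<Sum>u\<in>V. \<Sum>v\<in>{v. v \<in> V \<and> E v u}. g u v)"
    unfolding nbrs_def using sum.swap_restrict[OF finite_V finite_V] by simp
  also have "\<dots> = (\<Sum>u\<in>V. \<Sum>v\<in>nbrs V E u. g u v)"
    unfolding nbrs_def by (intro sum.cong refl) (auto dest: edge_sym)
  finally show ?thesis .
qed

lemma sum_nbrs_inverse_deg: "(\<Sum>u\<in>V. \<Sum>v\<in>nbrs V E u. 1 / real (deg V E u)) = real (card V)"
proof -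
  have "(\<Sum>v\<in>nbrs V E u. 1 / real (deg V E u)) = 1" if "u \<in> V" for u
    using deg_pos[OF that] by (simp add: deg_def)
  then have "(\<Sum>u\<in>V. \<Sum>v\<in>nbrs V E u. 1 / real (deg V E u)) = (\<Sum>u\<in>V. 1)"
    by (rule sum.cong[OF refl])
  then show ?thesis
    by simp
qed

text \<open>\<open>weight u v / card V\<close> is the probability that a neutral step lets \<open>v\<close> take the type of its
  neighbour \<open>u\<close>: either \<open>u\<close> reproduces and picks \<open>v\<close> (Birth-death), or \<open>v\<close> dies and picks
  \<open>u\<close> (death-Birth).\<close>

definition weight :: "'a \<Rightarrow> 'a \<Rightarrow> real" where
  "weight u v = lam / real (deg V E u) + (1 - lam) / real (deg V E v)"

definition step_op :: "('a set \<Rightarrow> real) \<Rightarrow> 'a set \<Rightarrow> real" where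
  "step_op k S = (1 / real (card V)) * (\<Sum>u\<in>V. \<Sum>v\<in>nbrs V E u. weight u v * k (take_type S u v))"

lemma weight_pos:
  assumes "u \<in> V" "v \<in> V"
  shows "0 < weight u v"
proof -
  have "0 < real (deg V E u)" "0 < real (deg V E v)"
    using deg_pos assms by (auto simp: Suc_le_eq)
  then show ?thesis
    using convex_comb_pos[OF lam_nonneg lam_le_1, of "1 / real (deg V E u)" "1 / real (deg V E v)"]
    unfolding weight_def by simp
qed

lemma fit_neutral: "fit 1 S u = 1"
  by (simp add: fit_def)

lemma reach_prob_neutral_Suc:
  "reach_prob V E lam 1 (Suc m) S = step_op (reach_prob V E lam 1 m) S"
proof -
  let ?k = "\<lambda>u v. reach_prob V E lam 1 m (take_type S u v)"
  let ?n = "real (card V)"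
  have "reach_prob V E lam 1 (Suc m) S =
      lam * (\<Sum>u\<in>V. \<Sum>v\<in>nbrs V E u. (1/?n) * (1 / real (deg V E u)) * ?k u v)
    + (1 - lam) * (\<Sum>v\<in>V. \<Sum>u\<in>nbrs V E v. (1/?n) * (1 / real (deg V E v)) * ?k u v)"
    by (simp add: fit_neutral deg_def sum_distrib_left mult.assoc)
  also have "\<dots> =
      lam * (\<Sum>u\<in>V. \<Sum>v\<in>nbrs V E u. (1/?n) * (1 / real (deg V E u)) * ?k u v)
    + (1 - lam) * (\<Sum>u\<in>V. \<Sum>v\<in>nbrs V E u. (1/?n) * (1 / real (deg V E v)) * ?k u v)"
    by (simp only: sum_nbrs_swap[of "\<lambda>u v. (1/?n) * (1 / real (deg V E v)) * ?k u v"])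
  also have "\<dots> = step_op (reach_prob V E lam 1 m) S"
    unfolding step_op_def weight_def sum_distrib_left sum.distrib[symmetric]
    by (intro sum.cong refl) (simp add: divide_inverse algebra_simps)
  finally show ?thesis .
qed

declare reach_prob.simps(2) [simp del]

lemma step_op_cong:
  "(\<And>u v. u \<in> V \<Longrightarrow> v \<in> nbrs V E u \<Longrightarrow> k (take_type S u v) = l (take_type S u v))
    \<Longrightarrow> step_op k S = step_op l S"
  unfolding step_op_def by (intro arg_cong2[where f = "(*)"] refl sum.cong) auto

lemma step_op_const: "step_op (\<lambda>T. c) S = c"
proof -
  have "(\<Sum>u\<in>V. \<Sum>v\<in>nbrs V E u. weight u v * c) =
      lam * c * (\<Sum>u\<in>V. \<Sum>v\<in>nbrs V E u. 1 / real (deg V E u))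
    + (1 - lam) * c * (\<Sum>u\<in>V. \<Sum>v\<in>nbrs V E u. 1 / real (deg V E v))"
    unfolding weight_def by (simp add: sum_distrib_left sum.distrib algebra_simps)
  also have "(\<Sum>u\<in>V. \<Sum>v\<in>nbrs V E u. 1 / real (deg V E v)) = real (card V)"
    using sum_nbrs_swap[of "\<lambda>u v. 1 / real (deg V E v)"] sum_nbrs_inverse_deg by simp
  finally show ?thesis
    unfolding step_op_def sum_nbrs_inverse_deg using card_V_pos by (simp add: field_simps)
qed

lemma step_op_diff: "step_op (\<lambda>T. k T - l T) S = step_op k S - step_op l S"
  unfolding step_op_def by (simp add: sum_subtractf right_diff_distrib algebra_simps)

lemma step_op_scale: "step_op (\<lambda>T. c * k T) S = c * step_op k S"
  unfolding step_op_def by (simp add: sum_distrib_left algebra_simps)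

lemma take_type_subset: "S \<subseteq> V \<Longrightarrow> v \<in> nbrs V E u \<Longrightarrow> take_type S u v \<subseteq> V"
  by (auto simp: take_type_def mem_nbrs)

lemma step_op_mono:
  assumes "S \<subseteq> V" and "\<And>T. T \<subseteq> V \<Longrightarrow> k T \<le> l T"
  shows "step_op k S \<le> step_op l S"
  unfolding step_op_def using card_V_pos
  by (intro mult_left_mono sum_mono assms(2) take_type_subset[OF assms(1)])
    (auto intro!: less_imp_le[OF weight_pos] simp: mem_nbrs)

lemma step_op_tendsto:
  assumes "\<And>T. T \<subseteq> V \<Longrightarrow> (\<lambda>m. g m T) \<longlonglongrightarrow> g' T" and "S \<subseteq> V"
  shows "(\<lambda>m. step_op (g m) S) \<longlonglongrightarrow> step_op g' S"
  unfolding step_op_def by (intro tendsto_intros assms(1) take_type_subset[OF assms(2)])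

lemma step_op_V: "step_op k V = k V"
proof -
  have "step_op k V = step_op (\<lambda>T. k V) V"
    by (rule step_op_cong) (auto simp: take_type_def mem_nbrs insert_absorb)
  then show ?thesis
    by (simp add: step_op_const)
qed

lemma step_op_empty: "step_op k {} = k {}"
proof -
  have "step_op k {} = step_op (\<lambda>T. k {}) {}"
    by (rule step_op_cong) (auto simp: take_type_def)
  then show ?thesis
    by (simp add: step_op_const)
qed

abbreviation reach :: "nat \<Rightarrow> 'a set \<Rightarrow> real" where
  "reach m S \<equiv> reach_prob V E lam 1 m S"

lemma reach_V: "reach m V = 1"
  by (induction m) (simp_all add: reach_prob_neutral_Suc step_op_V)

lemma reach_empty: "reach m {} = 0"
  using V_nonempty
  by (induction m) (simp_all add: reach_prob_neutral_Suc step_op_empty)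

lemma reach_le_1: "S \<subseteq> V \<Longrightarrow> reach m S \<le> 1"
proof (induction m arbitrary: S)
  case (Suc m)
  then have "step_op (reach m) S \<le> step_op (\<lambda>T. 1) S"
    by (intro step_op_mono) auto
  then show ?case
    by (simp only: reach_prob_neutral_Suc step_op_const)
qed simp

lemma reach_Suc_ge: "S \<subseteq> V \<Longrightarrow> reach m S \<le> reach (Suc m) S"
proof (induction m arbitrary: S)
  case 0
  have "step_op (\<lambda>T. 0) S \<le> step_op (reach 0) S"
    by (rule step_op_mono[OF 0]) simp
  then have "0 \<le> reach (Suc 0) S"
    by (simp only: step_op_const reach_prob_neutral_Suc)
  then show ?case
    using reach_V[of "Suc 0"] by simp
next
  case (Suc m)
  then have "step_op (reach m) S \<le> step_op (reach (Suc m)) S"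
    by (intro step_op_mono) auto
  moreover have "reach (Suc m) S = step_op (reach m) S"
    and "reach (Suc (Suc m)) S = step_op (reach (Suc m)) S"
    by (rule reach_prob_neutral_Suc)+
  ultimately show ?case
    by linarith
qed

lemma reach_tendsto_fp:
  assumes "S \<subseteq> V"
  shows "(\<lambda>m. reach m S) \<longlonglongrightarrow> fp V E lam 1 S"
proof -
  have "incseq (\<lambda>m. reach m S)"
    using reach_Suc_ge[OF assms] by (rule incseq_SucI)
  then obtain L where "(\<lambda>m. reach m S) \<longlonglongrightarrow> L"
    using incseq_convergent reach_le_1[OF assms] by blast
  then show ?thesis
    unfolding fp_def by (simp add: limI)
qed

definition harmonic :: "('a set \<Rightarrow> real) \<Rightarrow> bool" where
  "harmonic h \<longleftrightarrow> (\<forall>S\<subseteq>V. h S = step_op h S)"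

lemma harmonic_fp: "harmonic (fp V E lam 1)"
  unfolding harmonic_def
proof (intro allI impI)
  fix S assume S: "S \<subseteq> V"
  have "(\<lambda>m. reach (Suc m) S) \<longlonglongrightarrow> fp V E lam 1 S"
    using LIMSEQ_Suc[OF reach_tendsto_fp[OF S]] .
  moreover have "(\<lambda>m. reach (Suc m) S) \<longlonglongrightarrow> step_op (fp V E lam 1) S"
    unfolding reach_prob_neutral_Suc by (rule step_op_tendsto[OF reach_tendsto_fp S])
  ultimately show "fp V E lam 1 S = step_op (fp V E lam 1) S"
    by (rule LIMSEQ_unique)
qed

lemma fp_V: "fp V E lam 1 V = 1"
  unfolding fp_def reach_V by simp

lemma fp_empty: "fp V E lam 1 {} = 0"
  unfolding fp_def reach_empty by simp

lemma harmonic_diff: "harmonic g \<Longrightarrow> harmonic h \<Longrightarrow> harmonic (\<lambda>T. g T - h T)"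
  unfolding harmonic_def by (simp add: step_op_diff)

lemma harmonic_scale: "harmonic h \<Longrightarrow> harmonic (\<lambda>T. c * h T)"
  unfolding harmonic_def by (simp add: step_op_scale)

lemma harmonic_max_spreads:
  assumes S: "S \<subseteq> V" and h: "harmonic h" and max: "\<And>T. T \<subseteq> V \<Longrightarrow> h T \<le> h S"
    and u: "u \<in> S" and v: "v \<in> V" and uv: "E u v"
  shows "h (insert v S) = h S"
proof -
  let ?d = "\<lambda>x y. weight x y * (h S - h (take_type S x y))"
  have nonneg: "0 \<le> ?d x y" if "x \<in> V" "y \<in> nbrs V E x" for x y
  proof -
    have "h (take_type S x y) \<le> h S"
      using max take_type_subset[OF S that(2)] .
    then show ?thesis
      using weight_pos[of x y] that by (simp add: mem_nbrs)
  qed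
  have "step_op (\<lambda>T. h S - h T) S = 0"
    using h S by (simp add: harmonic_def step_op_diff step_op_const)
  then have "(\<Sum>x\<in>V. \<Sum>y\<in>nbrs V E x. ?d x y) = 0"
    using card_V_pos unfolding step_op_def by simp
  then have "(\<Sum>y\<in>nbrs V E u. ?d u y) = 0"
    using finite_V nonneg u S by (subst (asm) sum_nonneg_eq_0_iff) (auto intro!: sum_nonneg)
  then have "?d u v = 0"
    using finite_nbrs nonneg u S v uv by (subst (asm) sum_nonneg_eq_0_iff) (auto simp: mem_nbrs)
  then have "h (take_type S u v) = h S"
    using weight_pos[of u v] u S v by auto
  then show ?thesis
    using u by (simp add: take_type_def)
qed

lemma harmonic_nonpos:
  assumes h: "harmonic h" and "h {} \<le> 0" "h V \<le> 0" and S: "S \<subseteq> V"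
  shows "h S \<le> 0"
proof -
  define M where "M = Max (h ` Pow V)"
  have fin: "finite (h ` Pow V)"
    using finite_V by simp
  have le_M: "h T \<le> M" if "T \<subseteq> V" for T
    unfolding M_def using fin that by (intro Max_ge) auto
  have "M \<in> h ` Pow V"
    unfolding M_def using fin by (intro Max_in) auto
  then obtain S1 where S1: "S1 \<subseteq> V" "h S1 = M"
    by auto
  have "M \<le> 0" if "T \<subseteq> V" "h T = M" for T
    using that
  proof (induction "card (V - T)" arbitrary: T rule: less_induct)
    case less
    show ?case
    proof (cases "T = {} \<or> T = V")
      case True
      then show ?thesis
        using less.prems assms(2,3) by auto
    next
      case False
      then obtain u v where u: "u \<in> T" and v: "v \<in> V - T" and uv: "E u v"
        using exists_edge_leaving[OF less.prems(1)] by blast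
      have "h T' \<le> h T" if "T' \<subseteq> V" for T'
        using le_M[OF that] less.prems(2) by simp
      then have "h (insert v T) = M"
        using harmonic_max_spreads[OF less.prems(1) h _ u _ uv] v less.prems(2) by simp
      moreover have "card (V - insert v T) < card (V - T)"
      proof -
        have "V - insert v T = (V - T) - {v}"
          by blast
        then show ?thesis
          using card_Diff1_less[of "V - T" v] finite_V v by simp
      qed
      moreover have "insert v T \<subseteq> V"
        using less.prems(1) v by simp
      ultimately show ?thesis
        using less.hyps by blast
    qed
  qed
  then have "M \<le> 0"
    using S1 by blast
  then show ?thesis
    using le_M[OF S] by linarith
qed

lemma harmonic_unique:
  assumes "harmonic g" "harmonic h" "g {} = h {}" "g V = h V" and "S \<subseteq> V"
  shows "g S = h S"
proof -
  have "g S - h S \<le> 0"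
    using harmonic_nonpos[OF harmonic_diff[OF assms(1,2)]] assms(3-5) by simp
  moreover have "h S - g S \<le> 0"
    using harmonic_nonpos[OF harmonic_diff[OF assms(2,1)]] assms(3-5) by simp
  ultimately show ?thesis
    by linarith
qed

lemma harmonic_weighted_count:
  assumes balance: "\<And>u v. u \<in> V \<Longrightarrow> v \<in> V \<Longrightarrow> E u v \<Longrightarrow> F v * weight u v = F u * weight v u"
  shows "harmonic (\<lambda>T. \<Sum>x\<in>T. F x)"
  unfolding harmonic_def
proof (intro allI impI)
  fix S assume S: "S \<subseteq> V"
  let ?P = "\<lambda>T. \<Sum>x\<in>T. F x"
  define delta where
    "delta u v = (if u \<in> S \<and> v \<notin> S then F v else if u \<notin> S \<and> v \<in> S then - F v else 0)" for u v
  have "finite S"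
    using S finite_V finite_subset by blast
  then have take_type_P: "?P (take_type S u v) = ?P S + delta u v" for u v
    unfolding take_type_def delta_def by (auto simp: sum.insert_if sum_diff1)
  define D where "D = (\<Sum>x\<in>V. \<Sum>y\<in>nbrs V E x. weight x y * delta x y)"
  have cancel: "weight x y * delta x y + weight y x * delta y x = 0"
    if "x \<in> V" "y \<in> nbrs V E x" for x y
    using balance[of x y] that by (auto simp: delta_def mem_nbrs algebra_simps)
  have "D + D = (\<Sum>x\<in>V. \<Sum>y\<in>nbrs V E x. weight x y * delta x y + weight y x * delta y x)"
    unfolding D_def sum.distrib sum_nbrs_swap[of "\<lambda>u v. weight v u * delta v u", symmetric] ..
  also have "\<dots> = 0"
    using cancel by simp
  finally have "D = 0"
    by simp
  have "step_op ?P S = step_op (\<lambda>T. ?P S) S + (1 / real (card V)) * D"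
    unfolding step_op_def take_type_P D_def by (simp add: distrib_left sum.distrib)
  then show "?P S = step_op ?P S"
    using \<open>D = 0\<close> by (simp add: step_op_const)
qed

lemma fp_eq_weighted_fraction:
  assumes "\<And>u v. u \<in> V \<Longrightarrow> v \<in> V \<Longrightarrow> E u v \<Longrightarrow> F v * weight u v = F u * weight v u"
    and "(\<Sum>x\<in>V. F x) \<noteq> 0" and "S \<subseteq> V"
  shows "fp V E lam 1 S = (\<Sum>x\<in>S. F x) / (\<Sum>x\<in>V. F x)"
proof -
  have "harmonic (\<lambda>T. 1 / (\<Sum>x\<in>V. F x) * (\<Sum>x\<in>T. F x))"
    using harmonic_scale[OF harmonic_weighted_count[OF assms(1)]] .
  from harmonic_unique[OF harmonic_fp this _ _ assms(3)] show ?thesis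
    using assms(2) by (simp add: fp_V fp_empty)
qed

lemma bidegreed_balance:
  assumes "bidegreed V E d1 d2" and "f d1 = 1"
    and "f d2 = (lam * real d1 + (1 - lam) * real d2) / (lam * real d2 + (1 - lam) * real d1)"
    and u: "u \<in> V" and v: "v \<in> V"
  shows "f (deg V E v) * weight u v = f (deg V E u) * weight v u"
proof -
  have key: "f d2 * (lam / real d1 + (1 - lam) / real d2) = lam / real d2 + (1 - lam) / real d1"
    if "deg V E x = d1" "deg V E y = d2" "x \<in> V" "y \<in> V" for x y
  proof -
    have d: "0 < real d1" "0 < real d2"
      using that deg_pos by fastforce+
    then have "0 < lam * real d2 + (1 - lam) * real d1"
      using convex_comb_pos[OF lam_nonneg lam_le_1] by simp
    moreover have "lam / real d1 + (1 - lam) / real d2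
        = (lam * real d2 + (1 - lam) * real d1) / (real d1 * real d2)"
      and "lam / real d2 + (1 - lam) / real d1
        = (lam * real d1 + (1 - lam) * real d2) / (real d1 * real d2)"
      using d by (simp_all add: field_simps)
    ultimately show ?thesis
      unfolding assms(3) by simp
  qed
  have "deg V E u \<in> {d1, d2}" "deg V E v \<in> {d1, d2}"
    using assms(1) u v by (simp_all add: bidegreed_def)
  then show ?thesis
    using key[of u v] key[of v u] u v assms(2) unfolding weight_def by auto
qed

end

theorem mainTheorem10:
  fixes V :: "'a set" and E :: "'a \<Rightarrow> 'a \<Rightarrow> bool"
    and d1 d2 :: nat and lam :: real and S0 :: "'a set" and f :: "nat \<Rightarrow> real"
  assumes "simple_graph V E" and "connected_graph V E"
    and "1 \<le> d1" and "d1 \<le> d2" and "bidegreed V E d1 d2"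
    and "0 \<le> lam" and "lam \<le> 1"
    and "S0 \<subseteq> V"
    and "f d1 = 1"
    and "f d2 = (lam * real d1 + (1 - lam) * real d2) / (lam * real d2 + (1 - lam) * real d1)"
  shows "fp V E lam 1 S0 = (\<Sum>v\<in>S0. f (deg V E v)) / (\<Sum>v\<in>V. f (deg V E v))"
proof -
  have deg_cases: "deg V E v = d1 \<or> deg V E v = d2" if "v \<in> V" for v
    using assms(5) that by (auto simp: bidegreed_def)
  interpret neutral_mixed_moran V E lam
  proof
    show "1 \<le> deg V E v" if "v \<in> V" for v
      using deg_cases[OF that] assms(3,4) by auto
  qed (fact assms)+
  have "0 < real d1" "0 < real d2"
    using assms(3,4) by simp_all
  then have "0 < lam * real d1 + (1 - lam) * real d2" "0 < lam * real d2 + (1 - lam) * real d1"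
    using convex_comb_pos[OF assms(6,7)] by simp_all
  then have "0 < f d2"
    using assms(10) by simp
  then have "0 < f (deg V E v)" if "v \<in> V" for v
    using deg_cases[OF that] assms(9) by auto
  then have "(\<Sum>v\<in>V. f (deg V E v)) \<noteq> 0"
    using finite_V V_nonempty sum_pos by (metis less_irrefl)
  moreover have "f (deg V E v) * weight u v = f (deg V E u) * weight v u"
    if "u \<in> V" "v \<in> V" "E u v" for u v
    using bidegreed_balance[OF assms(5,9,10) that(1,2)] .
  ultimately show ?thesis
    using fp_eq_weighted_fraction[where F = "\<lambda>v. f (deg V E v)"] assms(8) by blast
qed

end
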